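(* Assume Conditions (i), (ii), (iii). For $s\in S^1$ let $X_s^\omega=X^\omega\cap(\{s\}\times Y^\omega)$; for each connected component $G_s^\omega$ of $X_s^\omega$ let $|G_s^\omega|$ be its largest radius, and let $|G^\omega|$ be the supremum of $|G_s^\omega|$ over all $s\in S^1$ and all connected components $G_s^\omega$ of $X_s^\omega$. Then for every $l>0$, $P(\{\omega:|G^\omega|\ge l\})=0$.
   Context: Setting. $(\Omega,\mathcal F,P,(\theta_t)_{t\in\mathbb R})$ is a metric dynamical system: each $\theta_t:\Omega\to\Omega$ is measurable and $P$-preserving, $\theta_0=\mathrm{id}$, $\theta_{t+u}=\theta_t\circ\theta_u$. $S^1=\mathbb R/\mathbb Z$; distances $|s-s'|$ and intervals $[s-\delta,s+\delta]$ on $S^1$ are taken in the lifted real coordinate. A $C^1$ perfect cocycle is a measurable map $\gamma:\mathbb R\times\Omega\times(S^1\times\mathbb R^d)\to S^1\times\mathbb R^d$, $(t,\omega,z)\mapsto \gamma^\omega_z(t)=\gamma^\omega(t)z$, such that for every $\omega$: $\gamma^\omega(0)=\mathrm{id}$; $\gamma^\omega_z(t_1+t_2)=\gamma^{\theta_{t_1}\omega}_{\gamma^\omega_z(t_1)}(t_2)$ for all $z$, $t_1,t_2$; $(t,z)\mapsto\gamma^\omega_z(t)$ is continuous; each $\gamma^\omega(t)$ is a $C^1$ diffeomorphism. Throughout, $\gamma$ is a $C^1$ perfect cocycle. Condition (i): there are a random compact set $\omega\mapsto Y^\omega\subset\mathbb R^d$ and $t_1>0$ such that for all $s\in S^1$,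 $y\in Y^\omega$, writing $\gamma^\omega_{(s,y)}(t_1)=(s',y')$, the continuous lift of the $S^1$-coordinate along $t\mapsto\gamma^\omega_{(s,y)}(t)$, $t\in[0,t_1]$, increases by exactly $1$ (i.e. $s'=s+1$ in the lift), and $y'\in Y^{\theta_{t_1}\omega}$; moreover there is a random compact set $X^\omega\subset S^1\times Y^\omega$ with $\gamma^\omega(t)X^\omega=X^{\theta_t\omega}$ for all $t\in\mathbb R$, whose projection onto $S^1$ is all of $S^1$, and whose diameter in the $y$-direction is less than a constant $b^*>0$. Notation. $\hat\theta=\theta_{t_1}$ and $\hat\theta^k$ is its $k$-fold iterate ($k\in\mathbb Z$). $H^\omega(s,y):=\gamma^\omega_{(s,y)}(t_1)=(h(s)\bmod 1,g^\omega(s,y))$ with $h(s)=s+1$; $H^{(n),\omega}:=H^{\hat\theta^{n-1}\omega}\circ\dots\circ H^\omega=(h^{(n)}(s)\bmod1,g^{(n),\omega}(s,y))$. Condition (ii): there are $\delta_1>0$, $L_1>0$ such that for every $(s,y)\in X^\omega$ there is a Lipschitz function $f:S^1\to\mathbb R^d$ with constant $L_1$, $f(s)=y$, and $(s^\#,f(s^\#))\in X^\omega$ for all $s^\#\in[s-\delta_1,s+\delta_1]$. For $\varepsilon>0$, $B(X^\omega,\varepsilon):=\{(s,y'):\exists (s,y)\in X^\omega,\ \|y'-y\|\le\varepsilon\}$. Condition (iii): there are $\lambda<1$, $\varepsilon_1>0$, $n_0\in\mathbb N$ such that for a.e. $\omega$, $\|D_yg^{(n_0),\omega}(s,y)\|\le\lambda$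 for all $(s,y)\in B(X^\omega,\varepsilon_1)$, and $c:=\operatorname{ess\,sup}_\omega\sup_{(s,y)\in B(X^\omega,\varepsilon_1)}\|\partial_s g^{(n_0),\omega}(s,y)\|<\infty$. *)

theory Defs
  imports "HOL-Probability.Probability"
begin

text \<open>The circle S1 = R/Z is represented through its universal cover R (lifted
coordinate): a point of S1 x R^d is a pair (s, y) :: real \<times> 'd, all objects being
1-periodic in s.\<close>

definition metric_dynamical_system ::
  "'w measure \<Rightarrow> (real \<Rightarrow> 'w \<Rightarrow> 'w) \<Rightarrow> bool" where
  "metric_dynamical_system M \<theta> \<longleftrightarrow>
     prob_space M \<and>
     (\<forall>t. \<theta> t \<in> measurable M M \<and> distr M M (\<theta> t) = M) \<and>
     (\<forall>\<omega>\<in>space M. \<theta> 0 \<omega> = \<omega>) \<and>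
     (\<forall>t u. \<forall>\<omega>\<in>space M. \<theta> (t + u) \<omega> = \<theta> t (\<theta> u \<omega>))"

definition C1_map :: "('a::euclidean_space \<Rightarrow> 'a) \<Rightarrow> bool" where
  "C1_map \<phi> \<longleftrightarrow> (\<exists>D :: 'a \<Rightarrow> ('a \<Rightarrow>\<^sub>L 'a).
      (\<forall>x. (\<phi> has_derivative blinfun_apply (D x)) (at x)) \<and> continuous_on UNIV D)"

definition C1_diffeo :: "('a::euclidean_space \<Rightarrow> 'a) \<Rightarrow> bool" where
  "C1_diffeo \<phi> \<longleftrightarrow> bij \<phi> \<and> C1_map \<phi> \<and> C1_map (inv \<phi>)"

definition circle_lift :: "(real \<times> 'd::euclidean_space \<Rightarrow> real \<times> 'd) \<Rightarrow> bool" where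
  "circle_lift \<phi> \<longleftrightarrow> (\<forall>s y. \<phi> (s + 1, y) = \<phi> (s, y) + (1, 0))"

text \<open>C^1 perfect cocycle over theta on S1 x R^d, given by its lift to R x R^d
(the lift is the continuous one with gamma(0) = id).\<close>
definition C1_perfect_cocycle ::
  "'w measure \<Rightarrow> (real \<Rightarrow> 'w \<Rightarrow> 'w) \<Rightarrow>
   ('w \<Rightarrow> real \<Rightarrow> real \<times> 'd::euclidean_space \<Rightarrow> real \<times> 'd) \<Rightarrow> bool" where
  "C1_perfect_cocycle M \<theta> \<gamma> \<longleftrightarrow>
     (\<lambda>(t, \<omega>, z). \<gamma> \<omega> t z) \<in> borel_measurable (borel \<Otimes>\<^sub>M M \<Otimes>\<^sub>M borel) \<and>
     (\<forall>\<omega>\<in>space M.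
        \<gamma> \<omega> 0 = id \<and>
        (\<forall>z t1 t2. \<gamma> \<omega> (t1 + t2) z = \<gamma> (\<theta> t1 \<omega>) t2 (\<gamma> \<omega> t1 z)) \<and>
        continuous_on UNIV (\<lambda>(t, z). \<gamma> \<omega> t z) \<and>
        (\<forall>t. circle_lift (\<gamma> \<omega> t) \<and> C1_diffeo (\<gamma> \<omega> t)))"

definition random_compact_set :: "'w measure \<Rightarrow> ('w \<Rightarrow> 'd::euclidean_space set) \<Rightarrow> bool" where
  "random_compact_set M K \<longleftrightarrow>
     (\<forall>\<omega>\<in>space M. compact (K \<omega>)) \<and>
     (\<forall>x. (\<lambda>\<omega>. infdist x (K \<omega>)) \<in> borel_measurable M)"

text \<open>Random compact set in S1 x R^d, represented by its 1-periodic preimage in R x R^d.\<close>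
definition random_compact_set_cyl ::
  "'w measure \<Rightarrow> ('w \<Rightarrow> (real \<times> 'd::euclidean_space) set) \<Rightarrow> bool" where
  "random_compact_set_cyl M K \<longleftrightarrow>
     (\<forall>\<omega>\<in>space M. (\<forall>s y. (s, y) \<in> K \<omega> \<longleftrightarrow> (s + 1, y) \<in> K \<omega>) \<and>
                  compact (K \<omega> \<inter> ({0..1} \<times> UNIV))) \<and>
     (\<forall>x. (\<lambda>\<omega>. infdist x (K \<omega>)) \<in> borel_measurable M)"

fun Hn :: "(real \<Rightarrow> 'w \<Rightarrow> 'w) \<Rightarrow> ('w \<Rightarrow> real \<Rightarrow> 'z \<Rightarrow> 'z) \<Rightarrow> real \<Rightarrow> nat \<Rightarrow> 'w \<Rightarrow> 'z \<Rightarrow> 'z" where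
  "Hn \<theta> \<gamma> t1 0 \<omega> = id"
| "Hn \<theta> \<gamma> t1 (Suc n) \<omega> = \<gamma> (((\<theta> t1) ^^ n) \<omega>) t1 \<circ> Hn \<theta> \<gamma> t1 n \<omega>"

definition gn :: "(real \<Rightarrow> 'w \<Rightarrow> 'w) \<Rightarrow> ('w \<Rightarrow> real \<Rightarrow> real \<times> 'd \<Rightarrow> real \<times> 'd)
                   \<Rightarrow> real \<Rightarrow> nat \<Rightarrow> 'w \<Rightarrow> real \<times> 'd \<Rightarrow> 'd" where
  "gn \<theta> \<gamma> t1 n \<omega> z = snd (Hn \<theta> \<gamma> t1 n \<omega> z)"

definition nbhd :: "(real \<times> 'd::real_normed_vector) set \<Rightarrow> real \<Rightarrow> (real \<times> 'd) set" where
  "nbhd X \<epsilon> = {(s, y'). \<exists>y. (s, y) \<in> X \<and> norm (y' - y) \<le> \<epsilon>}"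

definition fiber :: "(real \<times> 'd) set \<Rightarrow> real \<Rightarrow> 'd set" where
  "fiber X s = {y. (s, y) \<in> X}"

text \<open>|G| : largest radius of a set, taken as half its diameter (diameter = sup of distances).\<close>
definition radius :: "'d::metric_space set \<Rightarrow> real" where
  "radius G = diameter G / 2"

definition Gsize :: "(real \<times> 'd::euclidean_space) set \<Rightarrow> ereal" where
  "Gsize X = (SUP G \<in> (\<Union>s. components (fiber X s)). ereal (radius G))"

end

theory Submission
  imports Defs
begin

text \<open>
  Call \<open>\<omega>\<close> good if every point \<open>\<theta> (r * t1) \<omega>\<close>, \<open>r \<in> \<int>\<close>, of its orbit satisfies the
  derivative bound of condition (iii); by invariance of \<open>P\<close> and countability almost every \<open>\<omega>\<close>
  is good. For good \<open>\<omega>\<close> and any \<open>k\<close>, a fiber component \<open>G\<close> of \<open>X \<omega>\<close> is the homeomorphic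
  image under \<open>H^(k n0)\<close> of a connected subset \<open>G'\<close> of a fiber of \<open>X\<close> at \<open>\<theta> (- k n0 t1) \<omega>\<close>.
  Fibers have diameter at most \<open>b\<close>, so \<open>G'\<close> is covered by a number of \<open>\<epsilon>1/2\<close>-balls that does
  not depend on \<open>k\<close>, and any two points of \<open>G'\<close> are linked by a chain of overlapping balls. On
  \<open>\<epsilon>1\<close>-close points of a fiber \<open>g^(k n0)\<close> contracts by \<open>\<lambda>^k\<close>, hence
  \<open>diam G \<le> K \<lambda>^k \<epsilon>1 \<longrightarrow> 0\<close>.
\<close>

definition overlap_graph :: "'c set \<Rightarrow> ('c \<Rightarrow> 'a set) \<Rightarrow> ('c \<times> 'c) set" where
  "overlap_graph C P = {(c, c'). c \<in> C \<and> c' \<in> C \<and> P c \<inter> P c' \<noteq> {}}"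

lemma overlap_graph_rtrancl_closed: "(c, c') \<in> (overlap_graph C P)\<^sup>* \<Longrightarrow> c \<in> C \<Longrightarrow> c' \<in> C"
  by (induction rule: rtrancl_induct) (auto simp: overlap_graph_def)

lemma dist_le_along_overlap_path:
  fixes f :: "'a \<Rightarrow> 'b::metric_space"
  assumes small: "\<And>c u v. c \<in> C \<Longrightarrow> u \<in> P c \<Longrightarrow> v \<in> P c \<Longrightarrow> dist (f u) (f v) \<le> \<delta>"
  shows "(c, c') \<in> overlap_graph C P ^^ n \<Longrightarrow> c \<in> C \<Longrightarrow> u \<in> P c \<Longrightarrow> v \<in> P c' \<Longrightarrow>
    dist (f u) (f v) \<le> (real n + 1) * \<delta>"
proof (induction n arbitrary: c' v)
  case 0
  then show ?case using small by simp
next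
  case (Suc n)
  then obtain c'' where c'': "(c, c'') \<in> overlap_graph C P ^^ n" "(c'', c') \<in> overlap_graph C P"
    by (blast elim: relpow_Suc_E)
  then obtain w where w: "w \<in> P c''" "w \<in> P c'" and "c' \<in> C" by (auto simp: overlap_graph_def)
  have "dist (f u) (f w) \<le> (real n + 1) * \<delta>" using Suc c'' w by blast
  moreover have "dist (f w) (f v) \<le> \<delta>" using small[OF \<open>c' \<in> C\<close> w(2) Suc.prems(4)] .
  ultimately show ?case using dist_triangle[of "f u" "f v" "f w"] by (simp add: algebra_simps)
qed

lemma connected_overlap_graph_rtrancl:
  assumes conn: "connected G" and cover: "G \<subseteq> (\<Union>c\<in>C. P c)"
    and open_pieces: "\<And>c. c \<in> C \<Longrightarrow> openin (top_of_set G) (P c)"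
    and "x \<in> G" "y \<in> G"
  shows "\<exists>c c'. (c, c') \<in> (overlap_graph C P)\<^sup>* \<and> c \<in> C \<and> x \<in> P c \<and> y \<in> P c'"
    (is "?R x y")
proof (rule connected_equivalence_relation[OF conn \<open>x \<in> G\<close> \<open>y \<in> G\<close>])
  have "sym (overlap_graph C P)" by (auto simp: overlap_graph_def sym_def)
  then have "sym ((overlap_graph C P)\<^sup>*)" by (rule sym_rtrancl)
  show "?R v u" if "?R u v" for u v
  proof -
    from that obtain c c' where c: "(c, c') \<in> (overlap_graph C P)\<^sup>*" "c \<in> C" "u \<in> P c" "v \<in> P c'"
      by blast
    have "(c', c) \<in> (overlap_graph C P)\<^sup>*" using \<open>sym ((overlap_graph C P)\<^sup>*)\<close> c(1) by (rule symD)
    moreover have "c' \<in> C" using c(1,2) by (rule overlap_graph_rtrancl_closed)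
    ultimately show ?thesis using c(3,4) by blast
  qed
  show "?R u w" if "?R u v" "?R v w" for u v w
  proof -
    from that obtain c1 c2 c3 c4 where
      "(c1, c2) \<in> (overlap_graph C P)\<^sup>*" "c1 \<in> C" "u \<in> P c1" "v \<in> P c2"
      "(c3, c4) \<in> (overlap_graph C P)\<^sup>*" "c3 \<in> C" "v \<in> P c3" "w \<in> P c4"
      by blast
    moreover from this have "(c2, c3) \<in> overlap_graph C P"
      using overlap_graph_rtrancl_closed by (auto simp: overlap_graph_def)
    ultimately show ?thesis by (meson rtrancl_into_rtrancl rtrancl_trans)
  qed
  show "\<exists>U. openin (top_of_set G) U \<and> u \<in> U \<and> (\<forall>v\<in>U. ?R u v)" if "u \<in> G" for u
  proof -
    obtain c where "c \<in> C" "u \<in> P c" using cover \<open>u \<in> G\<close> by blast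
    then show ?thesis using open_pieces by blast
  qed
qed

lemma connected_dist_le_chain_cover:
  fixes G :: "'a::topological_space set" and f :: "'a \<Rightarrow> 'b::metric_space"
  assumes conn: "connected G" and fin: "finite C"
    and cover: "G \<subseteq> (\<Union>c\<in>C. P c)"
    and open_pieces: "\<And>c. c \<in> C \<Longrightarrow> openin (top_of_set G) (P c)"
    and small: "\<And>c u v. c \<in> C \<Longrightarrow> u \<in> P c \<Longrightarrow> v \<in> P c \<Longrightarrow> dist (f u) (f v) \<le> \<delta>"
    and "x \<in> G" "y \<in> G"
  shows "dist (f x) (f y) \<le> (real (card C) ^ 2 + 1) * \<delta>"
proof -
  have sub: "overlap_graph C P \<subseteq> C \<times> C" by (auto simp: overlap_graph_def)
  then have fin_graph: "finite (overlap_graph C P)" using fin by (meson finite_SigmaI finite_subset)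
  have "\<exists>c c'. (c, c') \<in> (overlap_graph C P)\<^sup>* \<and> c \<in> C \<and> x \<in> P c \<and> y \<in> P c'"
    using conn cover open_pieces \<open>x \<in> G\<close> \<open>y \<in> G\<close> by (rule connected_overlap_graph_rtrancl)
  then obtain c c' n where c: "c \<in> C" "x \<in> P c" "y \<in> P c'" "(c, c') \<in> overlap_graph C P ^^ n"
    and n: "n \<le> card (overlap_graph C P)"
    unfolding rtrancl_finite_eq_relpow[OF fin_graph] by blast
  have "card (overlap_graph C P) \<le> card C ^ 2"
    using card_mono[OF finite_SigmaI[OF fin fin] sub] by (simp add: card_cartesian_product power2_eq_square)
  with n have "real n \<le> real (card C) ^ 2" by (metis of_nat_le_iff of_nat_power order.trans)
  have "dist (f x) (f y) \<le> (real n + 1) * \<delta>"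
    using dist_le_along_overlap_path[of C P f \<delta>, OF small c(4,1,2,3)] .
  also have "\<dots> \<le> (real (card C) ^ 2 + 1) * \<delta>"
    using small[OF c(1,2,2)] \<open>real n \<le> real (card C) ^ 2\<close> by (intro mult_right_mono) simp_all
  finally show ?thesis .
qed

lemma uniform_chain_bound:
  fixes b \<epsilon> :: real
  assumes "\<epsilon> > 0"
  obtains K :: real where
    "\<And>(G :: 'a::euclidean_space set) (f :: 'a \<Rightarrow> 'b::metric_space) \<delta> x y.
      connected G \<Longrightarrow> (\<And>u v. u \<in> G \<Longrightarrow> v \<in> G \<Longrightarrow> dist u v \<le> b) \<Longrightarrow>
      (\<And>u v. u \<in> G \<Longrightarrow> v \<in> G \<Longrightarrow> dist u v < \<epsilon> \<Longrightarrow> dist (f u) (f v) \<le> \<delta>) \<Longrightarrow>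
      x \<in> G \<Longrightarrow> y \<in> G \<Longrightarrow> dist (f x) (f y) \<le> K * \<delta>"
proof -
  have "cball 0 b \<subseteq> (\<Union>c\<in>cball (0::'a) b. ball c (\<epsilon> / 2))"
    using \<open>\<epsilon> > 0\<close> by (auto intro!: bexI)
  then obtain C :: "'a set" where C: "finite C" "cball 0 b \<subseteq> (\<Union>c\<in>C. ball c (\<epsilon> / 2))"
    using compactE_image[OF compact_cball _ \<open>cball 0 b \<subseteq> _\<close>] by (metis open_ball)
  show ?thesis
  proof (rule that)
    fix G :: "'a set" and f :: "'a \<Rightarrow> 'b" and \<delta> x y
    assume conn: "connected G" and diam: "\<And>u v. u \<in> G \<Longrightarrow> v \<in> G \<Longrightarrow> dist u v \<le> b"
      and small: "\<And>u v. u \<in> G \<Longrightarrow> v \<in> G \<Longrightarrow> dist u v < \<epsilon> \<Longrightarrow> dist (f u) (f v) \<le> \<delta>"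
      and x: "x \<in> G" and y: "y \<in> G"
    define P where "P c = G \<inter> ball (x + c) (\<epsilon> / 2)" for c
    show "dist (f x) (f y) \<le> (real (card C) ^ 2 + 1) * \<delta>"
    proof (rule connected_dist_le_chain_cover[OF conn C(1) _ _ _ x y])
      show "G \<subseteq> (\<Union>c\<in>C. P c)"
      proof
        fix v assume v: "v \<in> G"
        have "v - x \<in> cball 0 b"
          using diam[OF x v] by (simp add: dist_norm norm_minus_commute)
        then obtain c where "c \<in> C" "v - x \<in> ball c (\<epsilon> / 2)" using C(2) by blast
        then have "c \<in> C" "v \<in> ball (x + c) (\<epsilon> / 2)"
          by (simp_all add: dist_norm algebra_simps)
        then show "v \<in> (\<Union>c\<in>C. P c)" using v by (auto simp: P_def)
      qed
      show "openin (top_of_set G) (P c)" for c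
        unfolding P_def by (rule openin_open_Int) simp
      show "dist (f u) (f v) \<le> \<delta>" if "u \<in> P c" "v \<in> P c" for c u v
      proof (rule small)
        show "u \<in> G" "v \<in> G" using that by (auto simp: P_def)
        have "dist (x + c) u < \<epsilon> / 2" "dist (x + c) v < \<epsilon> / 2"
          using that by (simp_all add: P_def)
        then show "dist u v < \<epsilon>" by (rule dist_triangle_half_r)
      qed
    qed
  qed
qed

lemma periodic_fst_shift_int:
  fixes A :: "(real \<times> 'a) set"
  assumes "\<And>s y. (s, y) \<in> A \<longleftrightarrow> (s + 1, y) \<in> A"
  shows "(s + of_int n, y) \<in> A \<longleftrightarrow> (s, y) \<in> A"
proof (induction n rule: int_induct[where k = 0])
  case (step1 i)
  then show ?case using assms[of "s + of_int i"] by (simp add: add.assoc)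
next
  case (step2 i)
  then show ?case using assms[of "s + of_int (i - 1)"] by (simp add: algebra_simps)
qed simp

lemma periodic_fiber_frac:
  fixes A :: "(real \<times> 'a) set"
  assumes "\<And>s y. (s, y) \<in> A \<longleftrightarrow> (s + 1, y) \<in> A"
  shows "fiber A s = fiber A (frac s)"
  using periodic_fst_shift_int[OF assms, of "frac s" "\<lfloor>s\<rfloor>"] by (auto simp: fiber_def frac_def)

lemma periodic_fiber_compact:
  fixes A :: "(real \<times> 'a::topological_space) set"
  assumes per: "\<And>s y. (s, y) \<in> A \<longleftrightarrow> (s + 1, y) \<in> A"
    and strip: "compact (A \<inter> ({0..1} \<times> UNIV))"
  shows "compact (fiber A s)"
proof -
  have "fiber A s = fiber A (frac s)" by (rule periodic_fiber_frac[OF per])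
  also have "\<dots> = snd ` (A \<inter> ({0..1} \<times> UNIV) \<inter> ({frac s} \<times> UNIV))"
    unfolding fiber_def using frac_lt_1[of s] by (auto intro: rev_image_eqI)
  also have "compact \<dots>"
    by (intro compact_continuous_image continuous_intros compact_Int_closed[OF strip]
        closed_Times closed_singleton closed_UNIV)
  finally show ?thesis .
qed

lemma periodic_bounded_snd:
  fixes A :: "(real \<times> 'a::metric_space) set"
  assumes per: "\<And>s y. (s, y) \<in> A \<longleftrightarrow> (s + 1, y) \<in> A"
    and strip: "compact (A \<inter> ({0..1} \<times> UNIV))"
  shows "bounded (snd ` A)"
proof -
  have "snd ` A \<subseteq> snd ` (A \<inter> ({0..1} \<times> UNIV))"
  proof
    fix y assume "y \<in> snd ` A"
    then obtain s where "(s, y) \<in> A" by force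
    then have "(frac s, y) \<in> A \<inter> ({0..1} \<times> UNIV)"
      using periodic_fiber_frac[OF per, of s] frac_lt_1[of s] by (auto simp: fiber_def)
    then show "y \<in> snd ` (A \<inter> ({0..1} \<times> UNIV))" by force
  qed
  moreover have "compact (snd ` (A \<inter> ({0..1} \<times> UNIV)))"
    by (intro compact_continuous_image strip continuous_intros)
  ultimately show ?thesis by (meson bounded_subset compact_imp_bounded)
qed

lemma Hn_add: "Hn \<theta> \<gamma> t1 (m + n) \<omega> = Hn \<theta> \<gamma> t1 n ((\<theta> t1 ^^ m) \<omega>) \<circ> Hn \<theta> \<gamma> t1 m \<omega>"
proof (induction n)
  case (Suc n)
  have "(\<theta> t1 ^^ (m + n)) \<omega> = (\<theta> t1 ^^ n) ((\<theta> t1 ^^ m) \<omega>)"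
    by (metis add.commute comp_apply funpow_add)
  then show ?case using Suc by (simp add: comp_assoc)
qed simp

definition fiberwise_contracting ::
  "(real \<times> 'a::real_normed_vector) set \<Rightarrow> (real \<times> 'a \<Rightarrow> 'b::real_normed_vector) \<Rightarrow> real \<Rightarrow> real \<Rightarrow> bool"
  where "fiberwise_contracting A g \<kappa> \<epsilon> \<longleftrightarrow>
    (\<forall>s u v. (s, u) \<in> A \<longrightarrow> (s, v) \<in> A \<longrightarrow> norm (u - v) < \<epsilon> \<longrightarrow>
       norm (g (s, u) - g (s, v)) \<le> \<kappa> * norm (u - v))"

lemma fiberwise_contracting_if_derivative_bound:
  fixes g :: "real \<times> 'a::real_normed_vector \<Rightarrow> 'b::real_normed_vector"
  assumes deriv: "\<forall>s y. (s, y) \<in> nbhd A \<epsilon> \<longrightarrow>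
      (\<exists>D. ((\<lambda>y'. g (s, y')) has_derivative D) (at y) \<and> onorm D \<le> lam)"
  shows "fiberwise_contracting A g (max lam 0) \<epsilon>"
  unfolding fiberwise_contracting_def
proof (intro allI impI)
  fix s u v assume u: "(s, u) \<in> A" and v: "(s, v) \<in> A" and uv: "norm (u - v) < \<epsilon>"
  have "\<forall>w\<in>closed_segment u v. \<exists>D. ((\<lambda>y'. g (s, y')) has_derivative D) (at w) \<and> onorm D \<le> lam"
  proof
    fix w assume "w \<in> closed_segment u v"
    then have "norm (w - u) \<le> norm (v - u)" by (rule segment_bound(1))
    then have "(s, w) \<in> nbhd A \<epsilon>"
      using u uv unfolding nbhd_def by (auto simp: norm_minus_commute)
    then show "\<exists>D. ((\<lambda>y'. g (s, y')) has_derivative D) (at w) \<and> onorm D \<le> lam"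
      using deriv by blast
  qed
  then obtain D where D: "\<forall>w\<in>closed_segment u v.
      ((\<lambda>y'. g (s, y')) has_derivative D w) (at w) \<and> onorm (D w) \<le> lam"
    by (rule bchoice[THEN exE])
  show "norm (g (s, u) - g (s, v)) \<le> max lam 0 * norm (u - v)"
  proof (rule differentiable_bound[OF convex_closed_segment, where f = "\<lambda>y'. g (s, y')" and f' = D])
    show "((\<lambda>y'. g (s, y')) has_derivative D w) (at w within closed_segment u v)"
      if "w \<in> closed_segment u v" for w
      using D that by (blast intro: has_derivative_at_withinI)
    show "onorm (D w) \<le> max lam 0" if "w \<in> closed_segment u v" for w
      using D that by fastforce
  qed simp_all
qed

locale winding_invariant_family =
  fixes M :: "'w measure" and \<theta> :: "real \<Rightarrow> 'w \<Rightarrow> 'w"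
    and \<gamma> :: "'w \<Rightarrow> real \<Rightarrow> real \<times> 'd::euclidean_space \<Rightarrow> real \<times> 'd"
    and t1 :: real and X :: "'w \<Rightarrow> (real \<times> 'd) set" and b :: real
  assumes theta_space: "\<omega> \<in> space M \<Longrightarrow> \<theta> t \<omega> \<in> space M"
    and theta_zero: "\<omega> \<in> space M \<Longrightarrow> \<theta> 0 \<omega> = \<omega>"
    and theta_add: "\<omega> \<in> space M \<Longrightarrow> \<theta> (t + u) \<omega> = \<theta> t (\<theta> u \<omega>)"
    and period_map_inj: "\<omega> \<in> space M \<Longrightarrow> inj (\<gamma> \<omega> t1)"
    and period_map_continuous: "\<omega> \<in> space M \<Longrightarrow> continuous_on UNIV (\<gamma> \<omega> t1)"
    and period_map_winds: "\<omega> \<in> space M \<Longrightarrow> p \<in> X \<omega> \<Longrightarrow> fst (\<gamma> \<omega> t1 p) = fst p + 1"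
    and period_map_image: "\<omega> \<in> space M \<Longrightarrow> \<gamma> \<omega> t1 ` X \<omega> = X (\<theta> t1 \<omega>)"
    and fiber_compact: "\<omega> \<in> space M \<Longrightarrow> compact (fiber (X \<omega>) s)"
    and fiber_dist_le:
      "\<omega> \<in> space M \<Longrightarrow> y \<in> fiber (X \<omega>) s \<Longrightarrow> y' \<in> fiber (X \<omega>) s \<Longrightarrow> dist y y' \<le> b"
begin

lemma funpow_theta_space: "\<omega> \<in> space M \<Longrightarrow> (\<theta> t1 ^^ n) \<omega> \<in> space M"
  by (induction n) (simp_all add: theta_space)

lemma funpow_theta: "\<omega> \<in> space M \<Longrightarrow> (\<theta> t1 ^^ n) \<omega> = \<theta> (real n * t1) \<omega>"
proof (induction n)
  case (Suc n)
  then show ?case using theta_add[of \<omega> t1 "real n * t1"] by (simp add: algebra_simps)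
qed (simp add: theta_zero)

lemma Hn_winds_in_X:
  assumes "\<omega> \<in> space M" "p \<in> X \<omega>"
  shows "Hn \<theta> \<gamma> t1 n \<omega> p \<in> X ((\<theta> t1 ^^ n) \<omega>) \<and> fst (Hn \<theta> \<gamma> t1 n \<omega> p) = fst p + real n"
proof (induction n)
  case (Suc n)
  have "(\<theta> t1 ^^ n) \<omega> \<in> space M" using assms(1) by (rule funpow_theta_space)
  with Suc show ?case
    using period_map_winds period_map_image[of "(\<theta> t1 ^^ n) \<omega>"] by auto
qed (simp add: assms)

lemma Hn_image:
  assumes "\<omega> \<in> space M"
  shows "Hn \<theta> \<gamma> t1 n \<omega> ` X \<omega> = X ((\<theta> t1 ^^ n) \<omega>)"
proof (induction n)
  case (Suc n)
  have "Hn \<theta> \<gamma> t1 (Suc n) \<omega> ` X \<omega> = \<gamma> ((\<theta> t1 ^^ n) \<omega>) t1 ` (Hn \<theta> \<gamma> t1 n \<omega> ` X \<omega>)"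
    by (simp add: image_comp)
  with Suc show ?case using period_map_image funpow_theta_space[OF assms] by simp
qed simp

lemma Hn_inj_continuous:
  assumes "\<omega> \<in> space M"
  shows "inj (Hn \<theta> \<gamma> t1 n \<omega>) \<and> continuous_on UNIV (Hn \<theta> \<gamma> t1 n \<omega>)"
proof (induction n)
  case (Suc n)
  have "(\<theta> t1 ^^ n) \<omega> \<in> space M" using assms by (rule funpow_theta_space)
  then have "inj (\<gamma> ((\<theta> t1 ^^ n) \<omega>) t1)" "continuous_on UNIV (\<gamma> ((\<theta> t1 ^^ n) \<omega>) t1)"
    by (simp_all add: period_map_inj period_map_continuous)
  with Suc show ?case
    by (metis Hn.simps(2) continuous_on_compose continuous_on_subset inj_compose subset_UNIV)
qed (simp add: continuous_on_id)

lemma fiber_homeomorphism: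
  assumes \<omega>: "\<omega> \<in> space M"
  shows "\<exists>g. homeomorphism (fiber (X \<omega>) s) (fiber (X ((\<theta> t1 ^^ n) \<omega>)) (s + real n))
               (\<lambda>y. gn \<theta> \<gamma> t1 n \<omega> (s, y)) g"
proof (rule homeomorphism_compact)
  let ?H = "Hn \<theta> \<gamma> t1 n \<omega>" and ?f = "\<lambda>y. gn \<theta> \<gamma> t1 n \<omega> (s, y)"
  have H_inj: "inj ?H" and H_cont: "continuous_on UNIV ?H"
    using Hn_inj_continuous[OF \<omega>] by blast+
  have H_fiber: "?H (s, y) = (s + real n, ?f y)" if "y \<in> fiber (X \<omega>) s" for y
  proof -
    have "(s, y) \<in> X \<omega>" using that by (simp add: fiber_def)
    from Hn_winds_in_X[OF \<omega> this, of n] show ?thesis by (simp add: gn_def prod_eq_iff)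
  qed
  show "compact (fiber (X \<omega>) s)" using \<omega> by (rule fiber_compact)
  have "continuous_on UNIV (\<lambda>y. ?H (s, y))"
    by (rule continuous_on_compose2[OF H_cont]) (auto intro: continuous_intros)
  then have "continuous_on UNIV ?f" unfolding gn_def by (rule continuous_on_snd)
  then show "continuous_on (fiber (X \<omega>) s) ?f" by (rule continuous_on_subset) simp
  show "inj_on ?f (fiber (X \<omega>) s)"
  proof (rule inj_onI)
    fix y y' assume "y \<in> fiber (X \<omega>) s" "y' \<in> fiber (X \<omega>) s" "?f y = ?f y'"
    then have "?H (s, y) = ?H (s, y')" using H_fiber by simp
    then show "y = y'" using H_inj by (simp add: inj_eq)
  qed
  show "?f ` fiber (X \<omega>) s = fiber (X ((\<theta> t1 ^^ n) \<omega>)) (s + real n)"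
  proof (intro equalityI subsetI)
    fix y' assume "y' \<in> ?f ` fiber (X \<omega>) s"
    then obtain y where y: "y \<in> fiber (X \<omega>) s" "y' = ?f y" by blast
    then have "(s, y) \<in> X \<omega>" by (simp add: fiber_def)
    from Hn_winds_in_X[OF \<omega> this, of n] show "y' \<in> fiber (X ((\<theta> t1 ^^ n) \<omega>)) (s + real n)"
      using H_fiber[OF y(1)] y(2) by (simp add: fiber_def)
  next
    fix y' assume "y' \<in> fiber (X ((\<theta> t1 ^^ n) \<omega>)) (s + real n)"
    then have "(s + real n, y') \<in> ?H ` X \<omega>" using Hn_image[OF \<omega>] by (simp add: fiber_def)
    then obtain p where p: "p \<in> X \<omega>" "?H p = (s + real n, y')" by force
    then have "fst p = s" using Hn_winds_in_X[OF \<omega> p(1), of n] by simp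
    then have "snd p \<in> fiber (X \<omega>) s" "?f (snd p) = y'"
      using p by (auto simp: fiber_def gn_def)
    then show "y' \<in> ?f ` fiber (X \<omega>) s" by (rule rev_image_eqI[OF _ sym])
  qed
qed

lemma fiberwise_contracting_Hn_add:
  assumes \<omega>: "\<omega> \<in> space M" and "0 \<le> \<kappa>" "\<kappa> \<le> 1" "0 \<le> \<kappa>'"
    and first: "fiberwise_contracting (X \<omega>) (gn \<theta> \<gamma> t1 n \<omega>) \<kappa> \<epsilon>"
    and later: "fiberwise_contracting (X ((\<theta> t1 ^^ n) \<omega>)) (gn \<theta> \<gamma> t1 m ((\<theta> t1 ^^ n) \<omega>)) \<kappa>' \<epsilon>"
  shows "fiberwise_contracting (X \<omega>) (gn \<theta> \<gamma> t1 (n + m) \<omega>) (\<kappa>' * \<kappa>) \<epsilon>"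
  unfolding fiberwise_contracting_def
proof (intro allI impI)
  fix s u v assume u: "(s, u) \<in> X \<omega>" and v: "(s, v) \<in> X \<omega>" and uv: "norm (u - v) < \<epsilon>"
  let ?H = "Hn \<theta> \<gamma> t1 n \<omega>" and ?g = "gn \<theta> \<gamma> t1 m ((\<theta> t1 ^^ n) \<omega>)"
  have Hu: "?H (s, u) = (s + real n, snd (?H (s, u)))" "?H (s, u) \<in> X ((\<theta> t1 ^^ n) \<omega>)"
    and Hv: "?H (s, v) = (s + real n, snd (?H (s, v)))" "?H (s, v) \<in> X ((\<theta> t1 ^^ n) \<omega>)"
    using Hn_winds_in_X[OF \<omega> u, of n] Hn_winds_in_X[OF \<omega> v, of n] by (simp_all add: prod_eq_iff)
  have step: "norm (snd (?H (s, u)) - snd (?H (s, v))) \<le> \<kappa> * norm (u - v)"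
    using first u v uv by (simp add: fiberwise_contracting_def gn_def)
  also have "\<dots> \<le> norm (u - v)" using \<open>0 \<le> \<kappa>\<close> \<open>\<kappa> \<le> 1\<close> by (simp add: mult_left_le_one_le)
  finally have "norm (snd (?H (s, u)) - snd (?H (s, v))) < \<epsilon>" using uv by simp
  then have "norm (?g (?H (s, u)) - ?g (?H (s, v))) \<le> \<kappa>' * norm (snd (?H (s, u)) - snd (?H (s, v)))"
    using later Hu Hv unfolding fiberwise_contracting_def by (metis (no_types, lifting))
  also have "\<dots> \<le> \<kappa>' * (\<kappa> * norm (u - v))" using step \<open>0 \<le> \<kappa>'\<close> by (rule mult_left_mono)
  finally show "norm (gn \<theta> \<gamma> t1 (n + m) \<omega> (s, u) - gn \<theta> \<gamma> t1 (n + m) \<omega> (s, v))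
      \<le> \<kappa>' * \<kappa> * norm (u - v)"
    by (simp add: Hn_add gn_def mult.assoc)
qed

lemma fiberwise_contracting_iterate:
  assumes "\<omega> \<in> space M" "0 \<le> \<kappa>" "\<kappa> \<le> 1"
    and "\<And>j. j < m \<Longrightarrow> fiberwise_contracting (X ((\<theta> t1 ^^ (j * n)) \<omega>))
                           (gn \<theta> \<gamma> t1 n ((\<theta> t1 ^^ (j * n)) \<omega>)) \<kappa> \<epsilon>"
  shows "fiberwise_contracting (X \<omega>) (gn \<theta> \<gamma> t1 (m * n) \<omega>) (\<kappa> ^ m) \<epsilon>"
  using assms(1,4)
proof (induction m arbitrary: \<omega>)
  case 0
  then show ?case by (simp add: fiberwise_contracting_def gn_def)
next
  case (Suc m)
  have "(\<theta> t1 ^^ (j * n)) ((\<theta> t1 ^^ n) \<omega>) = (\<theta> t1 ^^ (Suc j * n)) \<omega>" for j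
    by (metis add.commute comp_apply funpow_add mult_Suc)
  then have "fiberwise_contracting (X ((\<theta> t1 ^^ n) \<omega>)) (gn \<theta> \<gamma> t1 (m * n) ((\<theta> t1 ^^ n) \<omega>)) (\<kappa> ^ m) \<epsilon>"
    using Suc.prems funpow_theta_space by (intro Suc.IH) (simp_all del: mult_Suc)
  moreover have "fiberwise_contracting (X \<omega>) (gn \<theta> \<gamma> t1 n \<omega>) \<kappa> \<epsilon>"
    using Suc.prems(2)[of 0] by simp
  ultimately have "fiberwise_contracting (X \<omega>) (gn \<theta> \<gamma> t1 (n + m * n) \<omega>) (\<kappa> ^ m * \<kappa>) \<epsilon>"
    using Suc.prems(1) assms(2,3) by (intro fiberwise_contracting_Hn_add) simp_all
  then show ?case by (simp add: mult.commute)
qed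

lemma connected_fiber_subset_pullback:
  assumes \<omega>': "\<omega>' \<in> space M" and orbit: "(\<theta> t1 ^^ N) \<omega>' = \<omega>"
    and "connected G" and G_sub: "G \<subseteq> fiber (X \<omega>) s"
  obtains G' where "connected G'" "G' \<subseteq> fiber (X \<omega>') (s - real N)"
    "(\<lambda>y. gn \<theta> \<gamma> t1 N \<omega>' (s - real N, y)) ` G' = G"
proof -
  obtain g where hom: "homeomorphism (fiber (X \<omega>') (s - real N)) (fiber (X \<omega>) s)
      (\<lambda>y. gn \<theta> \<gamma> t1 N \<omega>' (s - real N, y)) g"
    using fiber_homeomorphism[OF \<omega>', of "s - real N" N] orbit by auto
  show ?thesis
  proof (rule that[of "g ` G"])
    show "connected (g ` G)" using \<open>connected G\<close>
      by (rule connected_continuous_image[OF continuous_on_subset[OF homeomorphism_cont2[OF hom] G_sub]])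
    show "g ` G \<subseteq> fiber (X \<omega>') (s - real N)"
      using G_sub homeomorphism_image2[OF hom] by blast
    show "(\<lambda>y. gn \<theta> \<gamma> t1 N \<omega>' (s - real N, y)) ` g ` G = G"
      using G_sub homeomorphism_apply2[OF hom] by (force simp: image_comp)
  qed
qed

lemma fiber_component_diameter_le:
  assumes "\<epsilon> > 0"
  obtains K where
    "\<And>\<omega> \<omega>' N \<kappa> s G. \<omega>' \<in> space M \<Longrightarrow> (\<theta> t1 ^^ N) \<omega>' = \<omega> \<Longrightarrow> 0 \<le> \<kappa> \<Longrightarrow>
      fiberwise_contracting (X \<omega>') (gn \<theta> \<gamma> t1 N \<omega>') \<kappa> \<epsilon> \<Longrightarrow>
      G \<in> components (fiber (X \<omega>) s) \<Longrightarrow> diameter G \<le> K * (\<kappa> * \<epsilon>)"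
proof -
  obtain K where K: "\<And>(G :: 'd set) (f :: 'd \<Rightarrow> 'd) \<delta> x y.
      connected G \<Longrightarrow> (\<And>u v. u \<in> G \<Longrightarrow> v \<in> G \<Longrightarrow> dist u v \<le> b) \<Longrightarrow>
      (\<And>u v. u \<in> G \<Longrightarrow> v \<in> G \<Longrightarrow> dist u v < \<epsilon> \<Longrightarrow> dist (f u) (f v) \<le> \<delta>) \<Longrightarrow>
      x \<in> G \<Longrightarrow> y \<in> G \<Longrightarrow> dist (f x) (f y) \<le> K * \<delta>"
    using uniform_chain_bound[OF assms] by blast
  show ?thesis
  proof (rule that)
    fix \<omega> \<omega>' N \<kappa> s G
    assume \<omega>': "\<omega>' \<in> space M" and orbit: "(\<theta> t1 ^^ N) \<omega>' = \<omega>" and "0 \<le> \<kappa>"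
      and contr: "fiberwise_contracting (X \<omega>') (gn \<theta> \<gamma> t1 N \<omega>') \<kappa> \<epsilon>"
      and G: "G \<in> components (fiber (X \<omega>) s)"
    let ?f = "\<lambda>y. gn \<theta> \<gamma> t1 N \<omega>' (s - real N, y)"
    obtain G' where "connected G'" and G'_sub: "G' \<subseteq> fiber (X \<omega>') (s - real N)"
      and G'_image: "?f ` G' = G"
      using connected_fiber_subset_pullback[OF \<omega>' orbit in_components_connected[OF G]
          in_components_subset[OF G]] .
    have "dist (?f x) (?f y) \<le> K * (\<kappa> * \<epsilon>)" if "x \<in> G'" "y \<in> G'" for x y
    proof (rule K[OF \<open>connected G'\<close> _ _ that])
      show "dist u v \<le> b" if "u \<in> G'" "v \<in> G'" for u v
        using fiber_dist_le[OF \<omega>'] G'_sub that by blast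
      show "dist (?f u) (?f v) \<le> \<kappa> * \<epsilon>" if "u \<in> G'" "v \<in> G'" "dist u v < \<epsilon>" for u v
      proof -
        have "(s - real N, u) \<in> X \<omega>'" "(s - real N, v) \<in> X \<omega>'"
          using G'_sub that by (auto simp: fiber_def)
        then have "dist (?f u) (?f v) \<le> \<kappa> * dist u v"
          using contr that(3) by (simp add: fiberwise_contracting_def dist_norm)
        also have "\<dots> \<le> \<kappa> * \<epsilon>" using that(3) \<open>0 \<le> \<kappa>\<close> by (simp add: mult_left_mono)
        finally show ?thesis .
      qed
    qed
    moreover have "G' \<noteq> {}" using G G'_image in_components_nonempty by blast
    ultimately show "diameter G \<le> K * (\<kappa> * \<epsilon>)"
      unfolding G'_image[symmetric] by (intro diameter_le) (auto simp: dist_norm)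
  qed
qed

lemma fiber_component_diameter_le_0:
  assumes "\<epsilon> > 0" "0 \<le> \<kappa>" "\<kappa> < 1" and \<omega>: "\<omega> \<in> space M"
    and contr: "\<And>r::int. fiberwise_contracting (X (\<theta> (of_int r * t1) \<omega>))
                           (gn \<theta> \<gamma> t1 n (\<theta> (of_int r * t1) \<omega>)) \<kappa> \<epsilon>"
    and G: "G \<in> components (fiber (X \<omega>) s)"
  shows "diameter G \<le> 0"
proof -
  obtain K where K: "\<And>\<omega> \<omega>' N \<kappa> s G. \<omega>' \<in> space M \<Longrightarrow> (\<theta> t1 ^^ N) \<omega>' = \<omega> \<Longrightarrow> 0 \<le> \<kappa> \<Longrightarrow>
      fiberwise_contracting (X \<omega>') (gn \<theta> \<gamma> t1 N \<omega>') \<kappa> \<epsilon> \<Longrightarrow>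
      G \<in> components (fiber (X \<omega>) s) \<Longrightarrow> diameter G \<le> K * (\<kappa> * \<epsilon>)"
    using fiber_component_diameter_le[OF assms(1)] by blast
  have "diameter G \<le> K * (\<kappa> ^ k * \<epsilon>)" for k
  proof -
    define \<omega>' where "\<omega>' = \<theta> (- (real (k * n) * t1)) \<omega>"
    have \<omega>': "\<omega>' \<in> space M" unfolding \<omega>'_def using \<omega> by (rule theta_space)
    have orbit: "(\<theta> t1 ^^ j) \<omega>' = \<theta> (of_int (int j - int (k * n)) * t1) \<omega>" for j
      using funpow_theta[OF \<omega>', of j] theta_add[OF \<omega>, of "real j * t1" "- (real (k * n) * t1)"]
      by (simp add: \<omega>'_def algebra_simps)
    have "fiberwise_contracting (X \<omega>') (gn \<theta> \<gamma> t1 (k * n) \<omega>') (\<kappa> ^ k) \<epsilon>"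
      using assms(2,3) by (intro fiberwise_contracting_iterate \<omega>') (simp_all only: orbit contr less_imp_le)
    moreover have "(\<theta> t1 ^^ (k * n)) \<omega>' = \<omega>" using orbit theta_zero[OF \<omega>] by simp
    ultimately show ?thesis using K[OF \<omega>' _ _ _ G] assms(2) by simp
  qed
  moreover have "(\<lambda>k. K * (\<kappa> ^ k * \<epsilon>)) \<longlonglongrightarrow> K * (0 * \<epsilon>)"
    using assms(2,3) by (intro tendsto_intros) simp
  ultimately show ?thesis by (intro LIMSEQ_le_const) auto
qed

end

lemma AE_integer_orbit:
  assumes mds: "metric_dynamical_system M \<theta>" and P: "AE \<omega> in M. P \<omega>"
  shows "AE \<omega> in M. \<forall>r::int. P (\<theta> (of_int r * t) \<omega>)"
proof -
  have "AE \<omega> in M. P (\<theta> c \<omega>)" for c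
  proof (rule AE_distrD[of "\<theta> c" M M P])
    show "\<theta> c \<in> measurable M M" using mds by (simp add: metric_dynamical_system_def)
    have "distr M M (\<theta> c) = M" using mds by (simp add: metric_dynamical_system_def)
    then show "AE \<omega> in distr M M (\<theta> c). P \<omega>" using P by (simp only:)
  qed
  then show ?thesis by (simp add: AE_all_countable)
qed

lemma winding_invariant_familyI:
  fixes \<gamma> :: "'w \<Rightarrow> real \<Rightarrow> real \<times> 'd::euclidean_space \<Rightarrow> real \<times> 'd"
  assumes mds: "metric_dynamical_system M \<theta>"
    and cocycle: "C1_perfect_cocycle M \<theta> \<gamma>"
    and rot: "\<forall>\<omega>\<in>space M. \<forall>s y. y \<in> Y \<omega> \<longrightarrow>
                fst (\<gamma> \<omega> t1 (s, y)) = s + 1 \<and> snd (\<gamma> \<omega> t1 (s, y)) \<in> Y (\<theta> t1 \<omega>)"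
    and X: "random_compact_set_cyl M X"
    and X_sub: "\<forall>\<omega>\<in>space M. X \<omega> \<subseteq> UNIV \<times> Y \<omega>"
    and X_inv: "\<forall>\<omega>\<in>space M. \<forall>t. \<gamma> \<omega> t ` X \<omega> = X (\<theta> t \<omega>)"
    and diam: "\<forall>\<omega>\<in>space M. diameter (snd ` X \<omega>) < b"
  shows "winding_invariant_family M \<theta> \<gamma> t1 X b"
proof
  fix \<omega> assume \<omega>: "\<omega> \<in> space M"
  show "\<theta> t \<omega> \<in> space M" for t
    using mds \<omega> by (auto simp: metric_dynamical_system_def dest: measurable_space)
  show "\<theta> 0 \<omega> = \<omega>" "\<theta> (t + u) \<omega> = \<theta> t (\<theta> u \<omega>)" for t u
    using mds \<omega> by (simp_all add: metric_dynamical_system_def)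
  have flow: "continuous_on UNIV (\<lambda>(t, z). \<gamma> \<omega> t z)" and "bij (\<gamma> \<omega> t1)"
    using cocycle \<omega> by (simp_all add: C1_perfect_cocycle_def C1_diffeo_def)
  then show "inj (\<gamma> \<omega> t1)" by (simp add: bij_is_inj)
  have "continuous_on UNIV (\<lambda>z. (\<lambda>(t, z). \<gamma> \<omega> t z) (t1, z))"
    by (rule continuous_on_compose2[OF flow]) (auto intro: continuous_intros)
  then show "continuous_on UNIV (\<gamma> \<omega> t1)" by simp
  show "fst (\<gamma> \<omega> t1 p) = fst p + 1" if "p \<in> X \<omega>" for p
  proof -
    have "p \<in> UNIV \<times> Y \<omega>" using X_sub \<omega> that by blast
    then have "snd p \<in> Y \<omega>" by (simp add: mem_Times_iff)
    then show ?thesis using rot \<omega> by (metis prod.collapse)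
  qed
  show "\<gamma> \<omega> t1 ` X \<omega> = X (\<theta> t1 \<omega>)" using X_inv \<omega> by blast
  have per: "(s, y) \<in> X \<omega> \<longleftrightarrow> (s + 1, y) \<in> X \<omega>" and strip: "compact (X \<omega> \<inter> ({0..1} \<times> UNIV))"
    for s y using X \<omega> unfolding random_compact_set_cyl_def by blast+
  show "compact (fiber (X \<omega>) s)" for s using per strip by (rule periodic_fiber_compact)
  show "dist y y' \<le> b" if "y \<in> fiber (X \<omega>) s" "y' \<in> fiber (X \<omega>) s" for s y y'
  proof -
    have "y \<in> snd ` X \<omega>" "y' \<in> snd ` X \<omega>"
      using that unfolding fiber_def by (auto intro: rev_image_eqI)
    then have "dist y y' \<le> diameter (snd ` X \<omega>)"
      by (intro diameter_bounded_bound periodic_bounded_snd[OF per strip])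
    also have "\<dots> \<le> b" using diam \<omega> by (simp add: less_imp_le)
    finally show ?thesis .
  qed
qed

lemma Gsize_le_0:
  assumes "\<And>s G. G \<in> components (fiber A s) \<Longrightarrow> diameter G \<le> 0"
  shows "Gsize A \<le> 0"
  unfolding Gsize_def radius_def zero_ereal_def by (rule SUP_least) (auto dest: assms)

theorem lemma3p2:
  fixes M :: "'w measure"
    and \<theta> :: "real \<Rightarrow> 'w \<Rightarrow> 'w"
    and \<gamma> :: "'w \<Rightarrow> real \<Rightarrow> real \<times> 'd::euclidean_space \<Rightarrow> real \<times> 'd"
    and Y :: "'w \<Rightarrow> 'd set"
    and X :: "'w \<Rightarrow> (real \<times> 'd) set"
    and t1 :: real
  assumes mds: "metric_dynamical_system M \<theta>"
    and cocycle: "C1_perfect_cocycle M \<theta> \<gamma>"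
    and condi_Y: "random_compact_set M Y"
    and condi_t1: "t1 > 0"
    and condi_rot: "\<forall>\<omega>\<in>space M. \<forall>s y. y \<in> Y \<omega> \<longrightarrow>
                      fst (\<gamma> \<omega> t1 (s, y)) = s + 1 \<and> snd (\<gamma> \<omega> t1 (s, y)) \<in> Y (\<theta> t1 \<omega>)"
    and condi_X: "random_compact_set_cyl M X"
    and condi_Xsub: "\<forall>\<omega>\<in>space M. X \<omega> \<subseteq> UNIV \<times> Y \<omega>"
    and condi_inv: "\<forall>\<omega>\<in>space M. \<forall>t. \<gamma> \<omega> t ` X \<omega> = X (\<theta> t \<omega>)"
    and condi_proj: "\<forall>\<omega>\<in>space M. fst ` X \<omega> = UNIV"
    and condi_diam: "\<exists>b>0. \<forall>\<omega>\<in>space M. diameter (snd ` X \<omega>) < b"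
    and condii: "\<exists>\<delta>1>0. \<exists>L1>0. \<forall>\<omega>\<in>space M. \<forall>s y. (s, y) \<in> X \<omega> \<longrightarrow>
                   (\<exists>f :: real \<Rightarrow> 'd. (\<forall>x. f (x + 1) = f x) \<and> L1-lipschitz_on UNIV f \<and>
                       f s = y \<and> (\<forall>s'\<in>{s - \<delta>1 .. s + \<delta>1}. (s', f s') \<in> X \<omega>))"
    and condiii: "\<exists>lam<1. \<exists>\<epsilon>1>0. \<exists>n0::nat.
          (AE \<omega> in M. \<forall>s y. (s, y) \<in> nbhd (X \<omega>) \<epsilon>1 \<longrightarrow>
              (\<exists>D. ((\<lambda>y'. gn \<theta> \<gamma> t1 n0 \<omega> (s, y')) has_derivative D) (at y) \<and> onorm D \<le> lam)) \<and>
          (\<exists>c. AE \<omega> in M. \<forall>s y. (s, y) \<in> nbhd (X \<omega>) \<epsilon>1 \<longrightarrow>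
              (\<exists>v. ((\<lambda>s'. gn \<theta> \<gamma> t1 n0 \<omega> (s', y)) has_vector_derivative v) (at s) \<and> norm v \<le> c))"
  shows "\<forall>l>0. AE \<omega> in M. Gsize (X \<omega>) < ereal l"
proof (intro allI impI)
  fix l :: real assume "l > 0"
  obtain b where "\<forall>\<omega>\<in>space M. diameter (snd ` X \<omega>) < b" using condi_diam by blast
  then interpret winding_invariant_family M \<theta> \<gamma> t1 X b
    by (rule winding_invariant_familyI[OF mds cocycle condi_rot condi_X condi_Xsub condi_inv])
  obtain lam \<epsilon>1 n0 where "lam < 1" "\<epsilon>1 > 0"
    and deriv: "AE \<omega> in M. \<forall>s y. (s, y) \<in> nbhd (X \<omega>) \<epsilon>1 \<longrightarrow>
      (\<exists>D. ((\<lambda>y'. gn \<theta> \<gamma> t1 n0 \<omega> (s, y')) has_derivative D) (at y) \<and> onorm D \<le> lam)"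
    using condiii by blast
  have "AE \<omega> in M. fiberwise_contracting (X \<omega>) (gn \<theta> \<gamma> t1 n0 \<omega>) (max lam 0) \<epsilon>1"
    using deriv by eventually_elim (rule fiberwise_contracting_if_derivative_bound)
  then have "AE \<omega> in M. \<forall>r::int. fiberwise_contracting (X (\<theta> (of_int r * t1) \<omega>))
                 (gn \<theta> \<gamma> t1 n0 (\<theta> (of_int r * t1) \<omega>)) (max lam 0) \<epsilon>1"
    by (rule AE_integer_orbit[OF mds])
  then show "AE \<omega> in M. Gsize (X \<omega>) < ereal l"
    using AE_space
  proof eventually_elim
    case (elim \<omega>)
    have "Gsize (X \<omega>) \<le> 0"
      using elim \<open>lam < 1\<close> \<open>\<epsilon>1 > 0\<close>
      by (intro Gsize_le_0 fiber_component_diameter_le_0[of \<epsilon>1 "max lam 0"]) auto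
    then show ?case using \<open>l > 0\<close> by (simp add: zero_ereal_def le_less_trans)
  qed
qed

end
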